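(* Let $\varphi(x)$, $x\in\mathbb{C}^n$, be given in disjunctive normal form $$\varphi(x)=\bigvee_{i=1}^{d}\Big(\bigwedge_{j=1}^{e_i} t_{ij}(x)=0\;\wedge\;\bigwedge_{k=1}^{f_i} u_{ik}(x)\neq 0\Big),$$ with $t_{ij},u_{ik}\in\mathbb{C}[x_1,\dots,x_n]$, having $d$ disjuncts and a total of $e=\sum_i e_i$ equations. Then there is a polynomial $p(a,b,x)\in\mathbb{C}[a,b,x]$ of degree at most $d$ in $a$ and at most $e$ in $b$ such that for all $x\in\mathbb{C}^n$, $$\varphi(x)\iff(\exists a\in\mathbb{C})(\forall b\in\mathbb{C})\;p(a,b,x)=0.$$ Explicitly, one may take $p(a,b,x)=\prod_{i=1}^d\Big[\big(1-a\prod_{k=1}^{f_i}u_{ik}(x)\big)+\sum_{j=1}^{e_i}t_{ij}(x)\,b^j\Big]$.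
   Context: Empty products are $1$ and empty sums are $0$; $a,b$ are single scalar variables. *)

theory Defs
  imports "HOL-Analysis.Analysis"
begin

text \<open>Over the infinite field C these are exactly the functions given by C[x_1,...,x_n].\<close>

inductive polyfun :: "(complex ^ 'n \<Rightarrow> complex) \<Rightarrow> bool" where
  const: "polyfun (\<lambda>x. c)"
| coord: "polyfun (\<lambda>x. x $ i)"
| add: "polyfun f \<Longrightarrow> polyfun g \<Longrightarrow> polyfun (\<lambda>x. f x + g x)"
| mult: "polyfun f \<Longrightarrow> polyfun g \<Longrightarrow> polyfun (\<lambda>x. f x * g x)"

end

theory Submission
  imports Defs "HOL-Computational_Algebra.Polynomial"
begin

text \<open>Each factor of \<open>p(a,b,x)\<close> is a polynomial in \<open>b\<close>, and a product of
polynomials over \<open>\<complex>\<close> vanishes for every \<open>b\<close> only if one factor is the zero polynomial. The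
\<open>i\<close>-th factor is zero exactly when all \<open>t\<^sub>i\<^sub>j(x)\<close> vanish and \<open>a \<cdot> \<Prod>\<^sub>k u\<^sub>i\<^sub>k(x) = 1\<close>, and
such an \<open>a\<close> exists iff no \<open>u\<^sub>i\<^sub>k(x)\<close> vanishes. Viewing each factor as an element of
\<open>\<complex>[x][b][a]\<close> of degree \<open>1\<close> in \<open>a\<close> and \<open>e\<^sub>i\<close> in \<open>b\<close>, the coefficients of the product are
polynomial in \<open>x\<close> and vanish beyond degree \<open>d\<close> in \<open>a\<close> and \<open>e\<close> in \<open>b\<close>.\<close>

lemma polyfun_sum:
  "finite A \<Longrightarrow> (\<And>i. i \<in> A \<Longrightarrow> polyfun (g i)) \<Longrightarrow> polyfun (\<lambda>x. \<Sum>i\<in>A. g i x)"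
  by (induction A rule: finite_induct) (auto intro: polyfun.intros)

lemma polyfun_prod:
  "finite A \<Longrightarrow> (\<And>i. i \<in> A \<Longrightarrow> polyfun (g i)) \<Longrightarrow> polyfun (\<lambda>x. \<Prod>i\<in>A. g i x)"
  by (induction A rule: finite_induct) (auto intro: polyfun.intros)

definition polyfun_coeffs :: "(complex ^ 'n \<Rightarrow> complex poly poly) \<Rightarrow> bool" where
  "polyfun_coeffs B \<longleftrightarrow> (\<forall>p q. polyfun (\<lambda>x. coeff (coeff (B x) p) q))"

lemma polyfun_coeffs_mult:
  assumes "polyfun_coeffs B" "polyfun_coeffs C"
  shows "polyfun_coeffs (\<lambda>x. B x * C x)"
  unfolding polyfun_coeffs_def
proof (intro allI)
  fix p q
  have "(\<lambda>x. coeff (coeff (B x * C x) p) q) =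
     (\<lambda>x. \<Sum>i\<le>p. \<Sum>j\<le>q. coeff (coeff (B x) i) j * coeff (coeff (C x) (p - i)) (q - j))"
    by (simp add: coeff_mult coeff_sum)
  moreover have "polyfun \<dots>"
    using assms unfolding polyfun_coeffs_def by (intro polyfun_sum polyfun.mult) auto
  ultimately show "polyfun (\<lambda>x. coeff (coeff (B x * C x) p) q)" by simp
qed

lemma polyfun_coeffs_prod:
  "finite A \<Longrightarrow> (\<And>i. i \<in> A \<Longrightarrow> polyfun_coeffs (B i)) \<Longrightarrow> polyfun_coeffs (\<lambda>x. \<Prod>i\<in>A. B i x)"
proof (induction A rule: finite_induct)
  case empty
  then show ?case by (simp add: polyfun_coeffs_def polyfun.const)
next
  case (insert a A)
  then show ?case by (simp add: polyfun_coeffs_mult)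
qed

lemma degree_coeff_mult_le:
  fixes B C :: "'a::comm_semiring_0 poly poly"
  assumes "\<And>p. degree (coeff B p) \<le> m" "\<And>p. degree (coeff C p) \<le> n"
  shows "degree (coeff (B * C) p) \<le> m + n"
  unfolding coeff_mult
  by (rule degree_sum_le) (auto intro: order.trans[OF degree_mult_le] add_mono assms)

lemma degree_coeff_prod_le:
  fixes B :: "'i \<Rightarrow> 'a::comm_semiring_1 poly poly"
  assumes "finite A" "\<And>i p. i \<in> A \<Longrightarrow> degree (coeff (B i) p) \<le> n i"
  shows "degree (coeff (\<Prod>i\<in>A. B i) p) \<le> (\<Sum>i\<in>A. n i)"
  using assms
proof (induction A arbitrary: p rule: finite_induct)
  case empty
  then show ?case by simp
next
  case (insert a A)
  then show ?case by (simp add: degree_coeff_mult_le)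
qed

lemma poly_eq_sum_atMost:
  fixes P :: "'a::comm_semiring_1 poly"
  assumes "degree P \<le> n"
  shows "poly P z = (\<Sum>i\<le>n. coeff P i * z ^ i)"
proof -
  have "poly P z = poly (\<Sum>i\<le>n. monom (coeff P i) i) z"
    by (simp only: poly_as_sum_of_monoms'[OF assms])
  then show ?thesis by (simp add: poly_sum poly_monom)
qed

lemma poly_poly_eq_double_sum:
  fixes B :: "'a::comm_semiring_1 poly poly"
  assumes "degree B \<le> m" "\<And>p. degree (coeff B p) \<le> n"
  shows "poly (poly B [:a:]) b = (\<Sum>p\<le>m. \<Sum>q\<le>n. coeff (coeff B p) q * a ^ p * b ^ q)"
proof -
  have "poly (poly B [:a:]) b = (\<Sum>p\<le>m. poly (coeff B p) b * a ^ p)"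
    by (simp add: poly_eq_sum_atMost[OF assms(1)] poly_sum)
  also have "\<dots> = (\<Sum>p\<le>m. (\<Sum>q\<le>n. coeff (coeff B p) q * b ^ q) * a ^ p)"
    by (simp add: poly_eq_sum_atMost[OF assms(2)])
  also have "\<dots> = (\<Sum>p\<le>m. \<Sum>q\<le>n. coeff (coeff B p) q * a ^ p * b ^ q)"
    by (simp add: sum_distrib_left sum_distrib_right mult_ac)
  finally show ?thesis .
qed

lemma prod_poly_eq_0_everywhere_iff:
  fixes P :: "'i \<Rightarrow> 'a::{idom,ring_char_0} poly"
  assumes "finite A"
  shows "(\<forall>z. (\<Prod>i\<in>A. poly (P i) z) = 0) \<longleftrightarrow> (\<exists>i\<in>A. P i = 0)"
proof -
  have "(\<forall>z. (\<Prod>i\<in>A. poly (P i) z) = 0) \<longleftrightarrow> poly (\<Prod>i\<in>A. P i) = poly 0"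
    by (auto simp: poly_prod fun_eq_iff)
  also have "\<dots> \<longleftrightarrow> (\<exists>i\<in>A. P i = 0)"
    using assms by (simp add: poly_eq_poly_eq_iff)
  finally show ?thesis .
qed

definition disjunct_poly :: "'a::comm_ring_1 \<Rightarrow> (nat \<Rightarrow> 'a) \<Rightarrow> nat \<Rightarrow> 'a poly poly" where
  "disjunct_poly w t n = [: 1 + (\<Sum>j=1..n. monom (t j) j), [:- w:] :]"

lemma poly_poly_disjunct_poly:
  "poly (poly (disjunct_poly w t n) [:a:]) b = (1 - a * w) + (\<Sum>j=1..n. t j * b ^ j)"
  by (simp add: disjunct_poly_def poly_sum poly_monom algebra_simps)

lemma coeff_poly_disjunct_poly:
  "coeff (poly (disjunct_poly w t n) [:a:]) q = (if q = 0 then 1 - a * w else if q \<le> n then t q else 0)"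
  by (simp add: disjunct_poly_def coeff_sum coeff_pCons split: nat.split)

lemma poly_disjunct_poly_eq_0_iff:
  "poly (disjunct_poly w t n) [:a:] = 0 \<longleftrightarrow> a * w = 1 \<and> (\<forall>j\<in>{1..n}. t j = 0)"
  unfolding poly_eq_iff coeff_poly_disjunct_poly
  by (auto simp: Ball_def)

lemma degree_disjunct_poly: "degree (disjunct_poly w t n) \<le> 1"
  by (simp add: disjunct_poly_def)

lemma degree_coeff_disjunct_poly: "degree (coeff (disjunct_poly w t n) p) \<le> n"
proof -
  have "degree (1 + (\<Sum>j=1..n. monom (t j) j)) \<le> n"
    by (intro degree_add_le degree_sum_le) (auto intro: order.trans[OF degree_monom_le])
  then show ?thesis
    by (auto simp: disjunct_poly_def coeff_pCons split: nat.split)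
qed

lemma polyfun_coeffs_disjunct_poly:
  assumes "polyfun w" "\<And>j. j \<in> {1..n} \<Longrightarrow> polyfun (t j)"
  shows "polyfun_coeffs (\<lambda>x. disjunct_poly (w x) (\<lambda>j. t j x) n)"
  unfolding polyfun_coeffs_def
proof (intro allI)
  fix p q
  have constant_coeff: "polyfun (\<lambda>x. if q = 0 then 1 else if q \<le> n then t q x else 0)"
    using assms(2)[of q] by (cases "q = 0"; cases "q \<le> n") (auto intro: polyfun.const)
  have linear_coeff: "polyfun (\<lambda>x. if q = 0 then - w x else 0)"
    using polyfun.mult[OF polyfun.const[of "-1"] assms(1)] by (cases "q = 0") (auto intro: polyfun.const)
  have "coeff (coeff (disjunct_poly (w x) (\<lambda>j. t j x) n) p) q =
          (if p = 0 then (if q = 0 then 1 else if q \<le> n then t q x else 0)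
           else if p = 1 then (if q = 0 then - w x else 0) else 0)" for x
    by (auto simp: disjunct_poly_def coeff_sum coeff_pCons split: nat.split)
  then show "polyfun (\<lambda>x. coeff (coeff (disjunct_poly (w x) (\<lambda>j. t j x) n) p) q)"
    using constant_coeff linear_coeff by (cases "p = 0"; cases "p = 1") (simp_all add: polyfun.const)
qed

lemma ex_all_prod_eq_0_iff:
  fixes w :: "'i \<Rightarrow> 'a::{field,ring_char_0}"
  assumes "finite A"
  shows "(\<exists>a. \<forall>b. (\<Prod>i\<in>A. (1 - a * w i) + (\<Sum>j=1..n i. t i j * b ^ j)) = 0)
     \<longleftrightarrow> (\<exists>i\<in>A. w i \<noteq> 0 \<and> (\<forall>j\<in>{1..n i}. t i j = 0))"
proof -
  have invertible_iff: "(\<exists>a. a * z = 1) \<longleftrightarrow> z \<noteq> 0" for z :: 'a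
    by (auto intro: exI[of _ "inverse z"])
  have "(\<Prod>i\<in>A. (1 - a * w i) + (\<Sum>j=1..n i. t i j * b ^ j)) =
          (\<Prod>i\<in>A. poly (poly (disjunct_poly (w i) (t i) (n i)) [:a:]) b)" for a b
    by (simp add: poly_poly_disjunct_poly)
  then have "(\<exists>a. \<forall>b. (\<Prod>i\<in>A. (1 - a * w i) + (\<Sum>j=1..n i. t i j * b ^ j)) = 0)
      \<longleftrightarrow> (\<exists>a. \<exists>i\<in>A. poly (disjunct_poly (w i) (t i) (n i)) [:a:] = 0)"
    by (simp add: prod_poly_eq_0_everywhere_iff[OF assms])
  also have "\<dots> \<longleftrightarrow> (\<exists>i\<in>A. (\<exists>a. a * w i = 1) \<and> (\<forall>j\<in>{1..n i}. t i j = 0))"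
    by (auto simp: poly_disjunct_poly_eq_0_iff)
  also have "\<dots> \<longleftrightarrow> (\<exists>i\<in>A. w i \<noteq> 0 \<and> (\<forall>j\<in>{1..n i}. t i j = 0))"
    by (simp only: invertible_iff)
  finally show ?thesis .
qed

lemma prod_eq_double_sum_coeff_prod_disjunct_poly:
  fixes w :: "'i \<Rightarrow> 'a::comm_ring_1"
  assumes "finite A"
  shows "(\<Prod>i\<in>A. (1 - a * w i) + (\<Sum>j=1..n i. t i j * b ^ j)) =
    (\<Sum>p\<le>card A. \<Sum>q\<le>(\<Sum>i\<in>A. n i).
       coeff (coeff (\<Prod>i\<in>A. disjunct_poly (w i) (t i) (n i)) p) q * a ^ p * b ^ q)"
proof -
  have "degree (\<Prod>i\<in>A. disjunct_poly (w i) (t i) (n i)) \<le> (\<Sum>i\<in>A. 1)"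
    by (rule order.trans[OF degree_prod_sum_le sum_mono])
      (simp_all add: assms degree_disjunct_poly[unfolded One_nat_def])
  moreover have "degree (coeff (\<Prod>i\<in>A. disjunct_poly (w i) (t i) (n i)) p) \<le> (\<Sum>i\<in>A. n i)" for p
    by (rule degree_coeff_prod_le) (simp_all add: assms degree_coeff_disjunct_poly)
  ultimately show ?thesis
    by (simp add: poly_poly_eq_double_sum[symmetric] poly_prod poly_poly_disjunct_poly)
qed

theorem theorem4p1:
  fixes d :: nat and e f :: "nat \<Rightarrow> nat"
    and t u :: "nat \<Rightarrow> nat \<Rightarrow> complex ^ 'n \<Rightarrow> complex"
  assumes t_poly: "\<And>i j. i \<in> {1..d} \<Longrightarrow> j \<in> {1..e i} \<Longrightarrow> polyfun (t i j)"
    and u_poly: "\<And>i k. i \<in> {1..d} \<Longrightarrow> k \<in> {1..f i} \<Longrightarrow> polyfun (u i k)"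
  shows "(\<exists>c :: nat \<Rightarrow> nat \<Rightarrow> complex ^ 'n \<Rightarrow> complex.
            (\<forall>i j. polyfun (c i j)) \<and>
            (\<forall>x. (\<exists>i\<in>{1..d}. (\<forall>j\<in>{1..e i}. t i j x = 0) \<and> (\<forall>k\<in>{1..f i}. u i k x \<noteq> 0))
                 \<longleftrightarrow> (\<exists>a. \<forall>b. (\<Sum>p\<le>d. \<Sum>q\<le>(\<Sum>i=1..d. e i). c p q x * a ^ p * b ^ q) = 0)))
       \<and> (\<forall>x. (\<exists>i\<in>{1..d}. (\<forall>j\<in>{1..e i}. t i j x = 0) \<and> (\<forall>k\<in>{1..f i}. u i k x \<noteq> 0))
                 \<longleftrightarrow> (\<exists>a. \<forall>b. (\<Prod>i=1..d. (1 - a * (\<Prod>k=1..f i. u i k x))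
                                        + (\<Sum>j=1..e i. t i j x * b ^ j)) = 0))"
proof -
  define B where "B i x = disjunct_poly (\<Prod>k=1..f i. u i k x) (\<lambda>j. t i j x) (e i)" for i x
  define c where "c p q x = coeff (coeff (\<Prod>i=1..d. B i x) p) q" for p q x
  have "polyfun_coeffs (B i)" if "i \<in> {1..d}" for i
    unfolding B_def using t_poly u_poly that by (intro polyfun_coeffs_disjunct_poly polyfun_prod) auto
  then have "polyfun_coeffs (\<lambda>x. \<Prod>i=1..d. B i x)"
    by (intro polyfun_coeffs_prod) auto
  then have c_polyfun: "\<forall>p q. polyfun (c p q)"
    by (simp add: polyfun_coeffs_def c_def[abs_def])
  have expansion: "(\<Sum>p\<le>d. \<Sum>q\<le>(\<Sum>i=1..d. e i). c p q x * a ^ p * b ^ q)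
      = (\<Prod>i=1..d. (1 - a * (\<Prod>k=1..f i. u i k x)) + (\<Sum>j=1..e i. t i j x * b ^ j))" for x a b
    using prod_eq_double_sum_coeff_prod_disjunct_poly[where A="{1..d}"
        and w="\<lambda>i. \<Prod>k=1..f i. u i k x" and t="\<lambda>i j. t i j x" and n=e]
    by (simp add: B_def c_def)
  have dnf_iff: "(\<exists>i\<in>{1..d}. (\<forall>j\<in>{1..e i}. t i j x = 0) \<and> (\<forall>k\<in>{1..f i}. u i k x \<noteq> 0))
      \<longleftrightarrow> (\<exists>a. \<forall>b. (\<Prod>i=1..d. (1 - a * (\<Prod>k=1..f i. u i k x))
                           + (\<Sum>j=1..e i. t i j x * b ^ j)) = 0)" for x
    using ex_all_prod_eq_0_iff[where A="{1..d}"
        and w="\<lambda>i. \<Prod>k=1..f i. u i k x" and t="\<lambda>i j. t i j x" and n=e]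
    by auto
  show ?thesis
    by (intro conjI exI[of _ c] allI) (use c_polyfun in blast, simp_all only: expansion dnf_iff)
qed

end
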